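(* For every $i\in\mathcal L$ and $\epsilon>0$, $$\Pr\Big(\limsup_{t\to\infty}e^{\mathcal M}_i(t)>\epsilon\Big)\le\eta\,u_{\mathcal M}(\epsilon),\qquad u_{\mathcal M}(\epsilon)=\frac{L\min\{d_M,M\}}{2\epsilon}\,\xi,$$ where $$\xi=\frac{1}{e^{2E_{\mathcal M}^2}-1}-\frac{c(1+e^{-\gamma})}{e^{2E_{\mathcal M}^2}-e^{-\gamma}}+\frac{c^2e^{-\gamma}}{e^{2E_{\mathcal M}^2}-e^{-2\gamma}}.$$
   Context: Agents $\mathcal V=\{1,\dots,N\}$ communicate over a fixed graph $\mathcal G=(\mathcal V,\mathcal E)$; $(i,j)\in\mathcal E$ means $j$ can send data to $i$, and $\mathcal N_i=\{j\in\mathcal V:(i,j)\in\mathcal E\}$ (with $i\notin\mathcal N_i$). Legitimate agents are $\mathcal L=\{1,\dots,L\}$, malicious agents $\mathcal M=\{L+1,\dots,N\}$, $M=N-L$; $d_M=\max_{i\in\mathcal L}|\mathcal N_i|<N$. $x_i(t)\in\mathbb R$ is agent $i$'s state, $x^{\mathcal L}(t)\in\mathbb R^L$, $x^{\mathcal M}(t)\in\mathbb R^M$ the stacked states; malicious states evolve arbitrarily. State bound: $\max_{i\in\mathcal V,t\ge0}|x_i(t)|\le\eta$. Trust: for each $i\in\mathcal L$, $j\in\mathcal N_i$, $t\ge0$ an observation $\alpha_{ij}(t)\in[0,1]$ is available; for each pair the $\alpha_{ij}(t)$, $t\ge0$, are independent with a common mean, and $E_{\mathcal L}=\mathbb E[\alpha_{ij}]-1/2$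 if $j\in\mathcal L$, $E_{\mathcal M}=\mathbb E[\alpha_{ij}]-1/2$ if $j\in\mathcal M$; assume $E_{\mathcal L}>0$, $E_{\mathcal M}<0$. Let $\beta_{ij}(t)=\sum_{s=0}^t(\alpha_{ij}(s)-1/2)$ and $\mathcal N_i(t)=\{j\in\mathcal N_i:\beta_{ij}(t)\ge0\}$. Weights: $w_{ij}(t)=1/(|\mathcal N_i(t)|+1)$ if $j\in\mathcal N_i(t)$, $0$ if $j\notin\mathcal N_i(t)\cup\{i\}$, $w_{ii}(t)=1-\sum_{j\in\mathcal N_i}w_{ij}(t)$. Protocol for $i\in\mathcal L$, $t\ge0$: $x_i(t+1)=\lambda_t x_i(0)+(1-\lambda_t)\sum_{j\in\mathcal N_i\cup\{i\}}w_{ij}(t)x_j(t)$, with $\lambda_t=c\,e^{-\gamma t}$, $0<c<1$, $\gamma>0$. $W^{\mathcal L}_t=[w_{ij}(t)]_{i,j\in\mathcal L}$, $W^{\mathcal M}_t=[w_{ij}(t)]_{i\in\mathcal L,j\in\mathcal M}$. Ordered products $\prod_{k=a}^{b}A_k$ mean $A_bA_{b-1}\cdots A_a$ (identity if $b<a$). Malicious contribution: $x^{\mathcal L,\mathcal M}(t+1)=\sum_{k=0}^{t}\Big(\prod_{s=k+1}^{t}(1-\lambda_s)W^{\mathcal L}_s\Big)(1-\lambda_k)W^{\mathcal M}_k x^{\mathcal M}(k)$, and $e^{\mathcal M}_i(t)=|[x^{\mathcal L,\mathcal M}(t)]_i|$. *)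

theory Defs
  imports "HOL-Probability.Probability"
begin

text \<open>Agents are 1..N, legitimate agents 1..L, malicious agents L+1..N.
  Nb i is the in-neighbour set of agent i.  The trust observations are
  alpha i j t omega, malicious states xM j t omega (arbitrary random processes).\<close>

definition lam :: "real \<Rightarrow> real \<Rightarrow> nat \<Rightarrow> real" where
  "lam c \<gamma> t = c * exp (- \<gamma> * real t)"

definition beta :: "(nat \<Rightarrow> nat \<Rightarrow> nat \<Rightarrow> 'a \<Rightarrow> real) \<Rightarrow> nat \<Rightarrow> nat \<Rightarrow> nat \<Rightarrow> 'a \<Rightarrow> real" where
  "beta \<alpha> i j t \<omega> = (\<Sum>s\<le>t. \<alpha> i j s \<omega> - 1/2)"

definition trusted :: "(nat \<Rightarrow> nat set) \<Rightarrow> (nat \<Rightarrow> nat \<Rightarrow> nat \<Rightarrow> 'a \<Rightarrow> real) \<Rightarrow> nat \<Rightarrow> nat \<Rightarrow> 'a \<Rightarrow> nat set" where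
  "trusted Nb \<alpha> i t \<omega> = {j \<in> Nb i. beta \<alpha> i j t \<omega> \<ge> 0}"

definition woff :: "(nat \<Rightarrow> nat set) \<Rightarrow> (nat \<Rightarrow> nat \<Rightarrow> nat \<Rightarrow> 'a \<Rightarrow> real) \<Rightarrow> nat \<Rightarrow> nat \<Rightarrow> nat \<Rightarrow> 'a \<Rightarrow> real" where
  "woff Nb \<alpha> i j t \<omega> =
     (if j \<in> trusted Nb \<alpha> i t \<omega> then 1 / (real (card (trusted Nb \<alpha> i t \<omega>)) + 1) else 0)"

definition wgt :: "(nat \<Rightarrow> nat set) \<Rightarrow> (nat \<Rightarrow> nat \<Rightarrow> nat \<Rightarrow> 'a \<Rightarrow> real) \<Rightarrow> nat \<Rightarrow> nat \<Rightarrow> nat \<Rightarrow> 'a \<Rightarrow> real" where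
  "wgt Nb \<alpha> i j t \<omega> =
     (if j = i then 1 - (\<Sum>k\<in>Nb i. woff Nb \<alpha> i k t \<omega>) else woff Nb \<alpha> i j t \<omega>)"

primrec legst :: "(nat \<Rightarrow> nat set) \<Rightarrow> nat \<Rightarrow> (nat \<Rightarrow> nat \<Rightarrow> nat \<Rightarrow> 'a \<Rightarrow> real) \<Rightarrow>
    (nat \<Rightarrow> nat \<Rightarrow> 'a \<Rightarrow> real) \<Rightarrow> (nat \<Rightarrow> real) \<Rightarrow> real \<Rightarrow> real \<Rightarrow> nat \<Rightarrow> 'a \<Rightarrow> nat \<Rightarrow> real" where
  "legst Nb L \<alpha> xM x0 c \<gamma> 0 = (\<lambda>\<omega> i. x0 i)"
| "legst Nb L \<alpha> xM x0 c \<gamma> (Suc t) = (\<lambda>\<omega> i.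
     lam c \<gamma> t * x0 i + (1 - lam c \<gamma> t) *
       (\<Sum>j\<in>Nb i \<union> {i}. wgt Nb \<alpha> i j t \<omega> *
          (if j \<le> L then legst Nb L \<alpha> xM x0 c \<gamma> t \<omega> j else xM j t \<omega>)))"

definition state :: "(nat \<Rightarrow> nat set) \<Rightarrow> nat \<Rightarrow> (nat \<Rightarrow> nat \<Rightarrow> nat \<Rightarrow> 'a \<Rightarrow> real) \<Rightarrow>
    (nat \<Rightarrow> nat \<Rightarrow> 'a \<Rightarrow> real) \<Rightarrow> (nat \<Rightarrow> real) \<Rightarrow> real \<Rightarrow> real \<Rightarrow> nat \<Rightarrow> nat \<Rightarrow> 'a \<Rightarrow> real" where
  "state Nb L \<alpha> xM x0 c \<gamma> k t \<omega> =
     (if k \<le> L then legst Nb L \<alpha> xM x0 c \<gamma> t \<omega> k else xM k t \<omega>)"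

text \<open>L x L matrices as functions on indices 1..L.\<close>
definition matmul :: "nat \<Rightarrow> (nat \<Rightarrow> nat \<Rightarrow> real) \<Rightarrow> (nat \<Rightarrow> nat \<Rightarrow> real) \<Rightarrow> nat \<Rightarrow> nat \<Rightarrow> real" where
  "matmul L A B = (\<lambda>i j. \<Sum>l\<in>{1..L}. A i l * B l j)"

definition idm :: "nat \<Rightarrow> nat \<Rightarrow> real" where
  "idm = (\<lambda>i j. if i = j then 1 else 0)"

text \<open>Ordered product: ordprod L A a b = A_b A_(b-1) ... A_a (identity if b < a).\<close>
primrec ordprod :: "nat \<Rightarrow> (nat \<Rightarrow> nat \<Rightarrow> nat \<Rightarrow> real) \<Rightarrow> nat \<Rightarrow> nat \<Rightarrow> nat \<Rightarrow> nat \<Rightarrow> real" where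
  "ordprod L A a 0 = (if a = 0 then A 0 else idm)"
| "ordprod L A a (Suc b) = (if a \<le> Suc b then matmul L (A (Suc b)) (ordprod L A a b) else idm)"

definition xLM :: "(nat \<Rightarrow> nat set) \<Rightarrow> nat \<Rightarrow> nat \<Rightarrow> (nat \<Rightarrow> nat \<Rightarrow> nat \<Rightarrow> 'a \<Rightarrow> real) \<Rightarrow>
    (nat \<Rightarrow> nat \<Rightarrow> 'a \<Rightarrow> real) \<Rightarrow> real \<Rightarrow> real \<Rightarrow> nat \<Rightarrow> 'a \<Rightarrow> nat \<Rightarrow> real" where
  "xLM Nb L N \<alpha> xM c \<gamma> t \<omega> i =
     (case t of 0 \<Rightarrow> 0
      | Suc t' \<Rightarrow> (\<Sum>k\<le>t'. \<Sum>l\<in>{1..L}.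
          ordprod L (\<lambda>s p q. (1 - lam c \<gamma> s) * wgt Nb \<alpha> p q s \<omega>) (Suc k) t' i l *
          ((1 - lam c \<gamma> k) * (\<Sum>j\<in>{L+1..N}. wgt Nb \<alpha> l j k \<omega> * xM j k \<omega>))))"

definition eM :: "(nat \<Rightarrow> nat set) \<Rightarrow> nat \<Rightarrow> nat \<Rightarrow> (nat \<Rightarrow> nat \<Rightarrow> nat \<Rightarrow> 'a \<Rightarrow> real) \<Rightarrow>
    (nat \<Rightarrow> nat \<Rightarrow> 'a \<Rightarrow> real) \<Rightarrow> real \<Rightarrow> real \<Rightarrow> nat \<Rightarrow> nat \<Rightarrow> 'a \<Rightarrow> real" where
  "eM Nb L N \<alpha> xM c \<gamma> i t \<omega> = \<bar>xLM Nb L N \<alpha> xM c \<gamma> t \<omega> i\<bar>"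

definition dM :: "(nat \<Rightarrow> nat set) \<Rightarrow> nat \<Rightarrow> nat" where
  "dM Nb L = Max ((\<lambda>i. card (Nb i)) ` {1..L})"

definition xi :: "real \<Rightarrow> real \<Rightarrow> real \<Rightarrow> real" where
  "xi c \<gamma> EM = 1 / (exp (2 * EM\<^sup>2) - 1)
     - c * (1 + exp (- \<gamma>)) / (exp (2 * EM\<^sup>2) - exp (- \<gamma>))
     + c\<^sup>2 * exp (- \<gamma>) / (exp (2 * EM\<^sup>2) - exp (- 2 * \<gamma>))"

definition uM :: "(nat \<Rightarrow> nat set) \<Rightarrow> nat \<Rightarrow> nat \<Rightarrow> real \<Rightarrow> real \<Rightarrow> real \<Rightarrow> real \<Rightarrow> real" where
  "uM Nb L N c \<gamma> EM \<epsilon> = real L * real (min (dM Nb L) (N - L)) / (2 * \<epsilon>) * xi c \<gamma> EM"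

end

theory Submission
  imports Defs
begin

text \<open>Unrolling the protocol, the malicious contribution at time t + 1 is a sum over k \<le> t of
  products of damped substochastic weight matrices applied to the malicious inputs of time k.
  Every entry of such a product is at most 1 - lam (k + 1), and a malicious neighbour j enters
  the update of agent l with weight at most 1/2, and only while l still trusts j, i.e. while
  beta l j k \<ge> 0. Hence e_i(t + 1) \<le> eta (sum over k < t of (1 - lam k)(1 - lam (k + 1)) Y k,
  plus Y t), where Y k is half the number of malicious links trusted at time k. The damping
  factors stay above (1 - c)^2, so limsup e_i > epsilon forces the damped series of the Y k to
  be at least epsilon / eta. By Hoeffding's inequality a malicious link is still trusted at
  time k with probability at most exp (-2 E_M^2 (k + 1)); the expected damped series is
  therefore at most L min {d_M, M} / 2 times a sum of three geometric series, which is xi, and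
  Markov's inequality concludes.\<close>

lemma trusted_subset: "trusted Nb \<alpha> l s \<omega> \<subseteq> Nb l"
  by (auto simp: trusted_def)

lemma sum_woff_eq:
  assumes "finite A" and "finite (Nb l)"
  shows "(\<Sum>q\<in>A. woff Nb \<alpha> l q s \<omega>)
       = real (card (A \<inter> trusted Nb \<alpha> l s \<omega>)) / (real (card (trusted Nb \<alpha> l s \<omega>)) + 1)"
  using sum.inter_restrict[OF assms(1), of "\<lambda>_. 1 / (real (card (trusted Nb \<alpha> l s \<omega>)) + 1)"
      "trusted Nb \<alpha> l s \<omega>"]
  by (simp add: woff_def)

lemma wgt_self_eq:
  assumes "finite (Nb l)"
  shows "wgt Nb \<alpha> l l s \<omega>
    = 1 - real (card (trusted Nb \<alpha> l s \<omega>)) / (real (card (trusted Nb \<alpha> l s \<omega>)) + 1)"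
  using sum_woff_eq[where A = "Nb l" and \<alpha> = \<alpha> and s = s and \<omega> = \<omega>] assms
    trusted_subset[of Nb \<alpha> l s \<omega>]
  by (simp add: wgt_def Int_absorb1)

lemma wgt_nonneg:
  assumes "finite (Nb l)"
  shows "0 \<le> wgt Nb \<alpha> l q s \<omega>"
proof (cases "q = l")
  case True
  then show ?thesis
    by (simp add: wgt_self_eq[of Nb l, OF assms])
qed (simp add: wgt_def woff_def)

lemma sum_wgt_le_one:
  assumes "finite (Nb l)" and "finite A" and "l \<in> A"
  shows "(\<Sum>q\<in>A. wgt Nb \<alpha> l q s \<omega>) \<le> 1"
proof -
  define T where "T = trusted Nb \<alpha> l s \<omega>"
  have "finite T"
    unfolding T_def by (rule finite_subset[OF trusted_subset[of Nb \<alpha> l] assms(1)])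
  have "(\<Sum>q\<in>A. wgt Nb \<alpha> l q s \<omega>) = wgt Nb \<alpha> l l s \<omega> + (\<Sum>q\<in>A - {l}. wgt Nb \<alpha> l q s \<omega>)"
    by (rule sum.remove[OF assms(2,3)])
  also have "(\<Sum>q\<in>A - {l}. wgt Nb \<alpha> l q s \<omega>) = (\<Sum>q\<in>A - {l}. woff Nb \<alpha> l q s \<omega>)"
    by (rule sum.cong) (auto simp: wgt_def)
  also have "wgt Nb \<alpha> l l s \<omega> + \<dots>
      = 1 - real (card T) / (real (card T) + 1) + real (card ((A - {l}) \<inter> T)) / (real (card T) + 1)"
    using assms(1,2) by (simp add: wgt_self_eq sum_woff_eq T_def)
  also have "\<dots> \<le> 1 - real (card T) / (real (card T) + 1) + real (card T) / (real (card T) + 1)"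
    using card_mono[OF \<open>finite T\<close>, of "(A - {l}) \<inter> T"] by (simp add: divide_right_mono)
  finally show ?thesis by simp
qed

lemma woff_le_half:
  assumes "finite (Nb l)"
  shows "woff Nb \<alpha> l j k \<omega> \<le> (if j \<in> trusted Nb \<alpha> l k \<omega> then 1/2 else 0)"
proof (cases "j \<in> trusted Nb \<alpha> l k \<omega>")
  case True
  have "finite (trusted Nb \<alpha> l k \<omega>)"
    by (rule finite_subset[OF trusted_subset[of Nb \<alpha> l] assms])
  with True have "0 < card (trusted Nb \<alpha> l k \<omega>)"
    by (auto simp: card_gt_0_iff)
  then have "1 / (real (card (trusted Nb \<alpha> l k \<omega>)) + 1) \<le> 1 / 2"
    by (intro divide_left_mono) auto
  with True show ?thesis by (simp add: woff_def)
qed (simp add: woff_def)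

lemma ordprod_substochastic:
  fixes A :: "nat \<Rightarrow> nat \<Rightarrow> nat \<Rightarrow> real" and r :: "nat \<Rightarrow> real"
  assumes nonneg: "\<And>s p q. p \<in> {1..L} \<Longrightarrow> q \<in> {1..L} \<Longrightarrow> 0 \<le> A s p q"
    and rows: "\<And>s p. p \<in> {1..L} \<Longrightarrow> (\<Sum>q\<in>{1..L}. A s p q) \<le> r s"
    and r_bounds: "\<And>s. 0 \<le> r s \<and> r s \<le> 1"
    and p: "p \<in> {1..L}"
  shows "(\<forall>q\<in>{1..L}. 0 \<le> ordprod L A a b p q)
    \<and> (\<Sum>q\<in>{1..L}. ordprod L A a b p q) \<le> (if a \<le> b then r a else 1)"
  using p
proof (induction b arbitrary: p)
  case 0
  then show ?case using nonneg rows by (simp add: idm_def)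
next
  case (Suc b)
  show ?case
  proof (cases "a \<le> Suc b")
    case True
    define R where "R = (if a \<le> b then r a else 1)"
    have R: "0 \<le> R" "R \<le> 1" using r_bounds by (auto simp: R_def)
    have "(\<Sum>q\<in>{1..L}. ordprod L A a (Suc b) p q)
        = (\<Sum>l\<in>{1..L}. A (Suc b) p l * (\<Sum>q\<in>{1..L}. ordprod L A a b l q))"
      using True by (simp add: matmul_def sum_distrib_left) (rule sum.swap)
    also have "\<dots> \<le> (\<Sum>l\<in>{1..L}. A (Suc b) p l * R)"
      using Suc nonneg unfolding R_def by (intro sum_mono mult_left_mono) auto
    also have "\<dots> \<le> r (Suc b) * R"
      using rows[OF Suc.prems] R by (simp add: sum_distrib_right[symmetric] mult_right_mono)
    also have "\<dots> \<le> (if a \<le> Suc b then r a else 1)"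
      using True r_bounds[of a] r_bounds[of "Suc b"]
      by (cases "a \<le> b") (auto simp: R_def mult_left_le_one_le le_Suc_eq)
    finally have "(\<Sum>q\<in>{1..L}. ordprod L A a (Suc b) p q) \<le> (if a \<le> Suc b then r a else 1)" .
    moreover have "0 \<le> ordprod L A a (Suc b) p q" if "q \<in> {1..L}" for q
      using True Suc.IH nonneg Suc.prems that
      by (auto simp: matmul_def intro!: sum_nonneg mult_nonneg_nonneg)
    ultimately show ?thesis by simp
  qed (simp add: idm_def)
qed

lemma lam_bounds:
  assumes "0 \<le> c" and "0 \<le> \<gamma>"
  shows "0 \<le> lam c \<gamma> s" and "lam c \<gamma> s \<le> c"
  using assms by (auto simp: lam_def mult_left_le)

definition damping :: "real \<Rightarrow> real \<Rightarrow> nat \<Rightarrow> real" where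
  "damping c \<gamma> k = (1 - lam c \<gamma> k) * (1 - lam c \<gamma> (Suc k))"

lemma damping_ge:
  assumes "0 < c" and "c < 1" and "0 \<le> \<gamma>"
  shows "(1 - c)\<^sup>2 \<le> damping c \<gamma> k"
  using lam_bounds[of c \<gamma> k] lam_bounds[of c \<gamma> "Suc k"] assms
  unfolding damping_def power2_eq_square by (intro mult_mono) auto

lemma damping_nonneg:
  assumes "0 < c" and "c < 1" and "0 \<le> \<gamma>"
  shows "0 \<le> damping c \<gamma> k"
  using zero_le_power2 damping_ge[OF assms, of k] by (rule order_trans)

lemma ordprod_damped_wgt_bounds:
  fixes \<alpha> :: "nat \<Rightarrow> nat \<Rightarrow> nat \<Rightarrow> 'a \<Rightarrow> real" and \<omega> :: 'a
  assumes finite_Nb: "\<forall>l\<in>{1..L}. finite (Nb l)"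
    and c: "0 < c" "c < 1" and \<gamma>: "0 \<le> \<gamma>"
    and pq: "p \<in> {1..L}" "q \<in> {1..L}"
  defines "A \<equiv> \<lambda>s p q. (1 - lam c \<gamma> s) * wgt Nb \<alpha> p q s \<omega>"
  shows "0 \<le> ordprod L A a b p q" and "ordprod L A a b p q \<le> (if a \<le> b then 1 - lam c \<gamma> a else 1)"
proof -
  have lam: "0 \<le> 1 - lam c \<gamma> s \<and> 1 - lam c \<gamma> s \<le> 1" for s
    using lam_bounds[of c \<gamma> s] c \<gamma> by auto
  have rows: "(\<Sum>q\<in>{1..L}. A s p q) \<le> 1 - lam c \<gamma> s" if "p \<in> {1..L}" for s p
    using sum_wgt_le_one[of Nb p "{1..L}" \<alpha> s \<omega>] finite_Nb that lam[of s]
    by (auto simp: A_def sum_distrib_left[symmetric] intro: mult_left_le)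
  have A_nonneg: "0 \<le> A s p q" if "p \<in> {1..L}" for s p q
    using lam[of s] wgt_nonneg[of Nb p] finite_Nb that
    unfolding A_def by (intro mult_nonneg_nonneg) auto
  have "\<forall>q\<in>{1..L}. 0 \<le> ordprod L A a b p q"
    and sum_le: "(\<Sum>q\<in>{1..L}. ordprod L A a b p q) \<le> (if a \<le> b then 1 - lam c \<gamma> a else 1)"
    using ordprod_substochastic[of L A "\<lambda>s. 1 - lam c \<gamma> s", OF A_nonneg rows lam pq(1)] by auto
  then show "0 \<le> ordprod L A a b p q" using pq(2) by blast
  have "ordprod L A a b p q \<le> (\<Sum>q\<in>{1..L}. ordprod L A a b p q)"
    using \<open>\<forall>q\<in>{1..L}. 0 \<le> ordprod L A a b p q\<close> pq(2) by (intro member_le_sum) auto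
  with sum_le show "ordprod L A a b p q \<le> (if a \<le> b then 1 - lam c \<gamma> a else 1)" by linarith
qed

text \<open>Each trusted malicious link is counted with weight 1/2, the largest weight a trusted
  neighbour can receive (woff_le_half).\<close>

definition trusted_malicious ::
    "(nat \<Rightarrow> nat set) \<Rightarrow> nat \<Rightarrow> nat \<Rightarrow> (nat \<Rightarrow> nat \<Rightarrow> nat \<Rightarrow> 'a \<Rightarrow> real) \<Rightarrow> nat \<Rightarrow> 'a \<Rightarrow> real" where
  "trusted_malicious Nb L N \<alpha> k \<omega> =
     (\<Sum>l\<in>{1..L}. \<Sum>j\<in>{L+1..N}. if j \<in> trusted Nb \<alpha> l k \<omega> then 1/2 else 0)"

lemma trusted_malicious_nonneg: "0 \<le> trusted_malicious Nb L N \<alpha> k \<omega>"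
  unfolding trusted_malicious_def by (intro sum_nonneg) auto

lemma abs_malicious_input_le:
  assumes "finite (Nb l)" and "l \<le> L" and xM: "\<forall>j\<in>{L+1..N}. \<bar>xM j k \<omega>\<bar> \<le> \<eta>"
  shows "\<bar>\<Sum>j\<in>{L+1..N}. wgt Nb \<alpha> l j k \<omega> * xM j k \<omega>\<bar>
      \<le> \<eta> * (\<Sum>j\<in>{L+1..N}. if j \<in> trusted Nb \<alpha> l k \<omega> then 1/2 else 0)"
proof -
  have "\<bar>wgt Nb \<alpha> l j k \<omega> * xM j k \<omega>\<bar> \<le> \<eta> * (if j \<in> trusted Nb \<alpha> l k \<omega> then 1/2 else 0)"
    if j: "j \<in> {L+1..N}" for j
  proof -
    have "wgt Nb \<alpha> l j k \<omega> = woff Nb \<alpha> l j k \<omega>"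
      using j assms(2) by (simp add: wgt_def)
    then have "\<bar>wgt Nb \<alpha> l j k \<omega> * xM j k \<omega>\<bar> = woff Nb \<alpha> l j k \<omega> * \<bar>xM j k \<omega>\<bar>"
      by (simp add: abs_mult woff_def)
    also have "\<dots> \<le> (if j \<in> trusted Nb \<alpha> l k \<omega> then 1/2 else 0) * \<eta>"
    proof (rule mult_mono)
      show "woff Nb \<alpha> l j k \<omega> \<le> (if j \<in> trusted Nb \<alpha> l k \<omega> then 1/2 else 0)"
        by (rule woff_le_half[of Nb l \<alpha> j k \<omega>, OF assms(1)])
      show "\<bar>xM j k \<omega>\<bar> \<le> \<eta>" using xM j by blast
    qed simp_all
    finally show ?thesis by (simp add: mult.commute)
  qed
  then have "(\<Sum>j\<in>{L+1..N}. \<bar>wgt Nb \<alpha> l j k \<omega> * xM j k \<omega>\<bar>)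
      \<le> \<eta> * (\<Sum>j\<in>{L+1..N}. if j \<in> trusted Nb \<alpha> l k \<omega> then 1/2 else 0)"
    unfolding sum_distrib_left by (intro sum_mono) auto
  then show ?thesis by (rule order_trans[OF sum_abs])
qed

text \<open>Only the newest input, at time t, escapes the damping factor 1 - lam (Suc k).\<close>

lemma eM_Suc_le:
  fixes \<alpha> :: "nat \<Rightarrow> nat \<Rightarrow> nat \<Rightarrow> 'a \<Rightarrow> real" and \<omega> :: 'a
  assumes finite_Nb: "\<forall>l\<in>{1..L}. finite (Nb l)"
    and c: "0 < c" "c < 1" and \<gamma>: "0 \<le> \<gamma>"
    and xM: "\<forall>j\<in>{L+1..N}. \<forall>k. \<bar>xM j k \<omega>\<bar> \<le> \<eta>" and \<eta>: "0 \<le> \<eta>"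
    and i: "i \<in> {1..L}"
  shows "eM Nb L N \<alpha> xM c \<gamma> i (Suc t) \<omega>
    \<le> \<eta> * ((\<Sum>k<t. damping c \<gamma> k * trusted_malicious Nb L N \<alpha> k \<omega>) + trusted_malicious Nb L N \<alpha> t \<omega>)"
proof -
  define A where "A = (\<lambda>s p q. (1 - lam c \<gamma> s) * wgt Nb \<alpha> p q s \<omega>)"
  define m where "m k l = (\<Sum>j\<in>{L+1..N}. wgt Nb \<alpha> l j k \<omega> * xM j k \<omega>)" for k l
  define y where "y k l = (\<Sum>j\<in>{L+1..N}. if j \<in> trusted Nb \<alpha> l k \<omega> then 1/2 else 0::real)" for k l
  define D where "D k = (if k < t then damping c \<gamma> k else 1)" for k
  have lam: "0 \<le> 1 - lam c \<gamma> s" "1 - lam c \<gamma> s \<le> 1" for s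
    using lam_bounds[of c \<gamma> s] c \<gamma> by auto
  have term_le: "\<bar>ordprod L A (Suc k) t i l * ((1 - lam c \<gamma> k) * m k l)\<bar> \<le> D k * (\<eta> * y k l)"
    if k: "k \<le> t" and l: "l \<in> {1..L}" for k l
  proof -
    have P: "0 \<le> ordprod L A (Suc k) t i l"
      "ordprod L A (Suc k) t i l \<le> (if Suc k \<le> t then 1 - lam c \<gamma> (Suc k) else 1)"
      using ordprod_damped_wgt_bounds[OF finite_Nb c \<gamma> i l, where \<alpha> = \<alpha> and \<omega> = \<omega> and a = "Suc k" and b = t]
      unfolding A_def by auto
    have PD: "ordprod L A (Suc k) t i l * (1 - lam c \<gamma> k) \<le> D k"
    proof (cases "k < t")
      case True
      then have "ordprod L A (Suc k) t i l * (1 - lam c \<gamma> k) \<le> (1 - lam c \<gamma> (Suc k)) * (1 - lam c \<gamma> k)"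
        using P lam[of k] by (intro mult_right_mono) auto
      with True show ?thesis by (simp add: D_def damping_def mult.commute)
    next
      case False
      with P k lam[of k] show ?thesis by (simp add: D_def mult_le_one)
    qed
    have "\<bar>m k l\<bar> \<le> \<eta> * y k l"
      unfolding m_def y_def by (rule abs_malicious_input_le) (use finite_Nb l xM in auto)
    moreover have "0 \<le> D k"
      using PD P(1) lam[of k] by (meson mult_nonneg_nonneg order_trans)
    moreover have "\<bar>ordprod L A (Suc k) t i l * ((1 - lam c \<gamma> k) * m k l)\<bar>
        = ordprod L A (Suc k) t i l * (1 - lam c \<gamma> k) * \<bar>m k l\<bar>"
      using P(1) lam[of k] by (simp add: abs_mult)
    ultimately show ?thesis
      using PD by (simp add: mult_mono)
  qed
  have "eM Nb L N \<alpha> xM c \<gamma> i (Suc t) \<omega> =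
      \<bar>\<Sum>k\<le>t. \<Sum>l\<in>{1..L}. ordprod L A (Suc k) t i l * ((1 - lam c \<gamma> k) * m k l)\<bar>"
    unfolding eM_def xLM_def A_def m_def by simp
  also have "\<dots> \<le> (\<Sum>k\<le>t. \<Sum>l\<in>{1..L}. D k * (\<eta> * y k l))"
  proof (rule order_trans[OF sum_abs], intro sum_mono)
    fix k assume "k \<in> {..t}"
    then show "\<bar>\<Sum>l\<in>{1..L}. ordprod L A (Suc k) t i l * ((1 - lam c \<gamma> k) * m k l)\<bar>
        \<le> (\<Sum>l\<in>{1..L}. D k * (\<eta> * y k l))"
      using term_le by (intro order_trans[OF sum_abs] sum_mono) auto
  qed
  also have "\<dots> = \<eta> * (\<Sum>k\<le>t. D k * trusted_malicious Nb L N \<alpha> k \<omega>)"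
    by (simp add: trusted_malicious_def y_def sum_distrib_left mult.left_commute)
  also have "\<dots> = \<eta> * ((\<Sum>k<t. D k * trusted_malicious Nb L N \<alpha> k \<omega>) + D t * trusted_malicious Nb L N \<alpha> t \<omega>)"
    using sum.lessThan_Suc[of "\<lambda>k. D k * trusted_malicious Nb L N \<alpha> k \<omega>" t]
    by (simp only: lessThan_Suc_atMost)
  also have "\<dots> = \<eta> * ((\<Sum>k<t. damping c \<gamma> k * trusted_malicious Nb L N \<alpha> k \<omega>) + trusted_malicious Nb L N \<alpha> t \<omega>)"
    by (simp add: D_def)
  finally show ?thesis .
qed

lemma limsup_shift_le:
  fixes e :: "nat \<Rightarrow> real"
  assumes "\<And>t. e (Suc t) \<le> b t"
  shows "limsup (\<lambda>t. ereal (e t)) \<le> limsup (\<lambda>t. ereal (b t))"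
  using Limsup_mono[of "\<lambda>t. ereal (e (t + 1))" "\<lambda>t. ereal (b t)" sequentially] assms
  by (simp add: limsup_shift[of "\<lambda>t. ereal (e t)", symmetric])

text \<open>Summability forces y to vanish, because the weights d stay above delta; otherwise the
  right-hand side is infinite unless eta = 0.\<close>

lemma ennreal_le_of_limsup_gt:
  fixes e d y :: "nat \<Rightarrow> real"
  assumes d: "\<And>k. \<delta> \<le> d k" and "0 < \<delta>" and y: "\<And>k. 0 \<le> y k"
    and bound: "\<And>t. e (Suc t) \<le> \<eta> * ((\<Sum>k<t. d k * y k) + y t)" and "0 \<le> \<eta>"
    and gt: "ereal \<epsilon> < limsup (\<lambda>t. ereal (e t))"
  shows "ennreal \<epsilon> \<le> ennreal \<eta> * (\<Sum>k. ennreal (d k * y k))"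
proof -
  have f: "0 \<le> d k * y k" for k
    using d[of k] \<open>0 < \<delta>\<close> y[of k] by simp
  show ?thesis
  proof (cases "summable (\<lambda>k. d k * y k)")
    case True
    define s where "s = (\<Sum>k. d k * y k)"
    have "y k \<le> (d k * y k) / \<delta>" for k
      using mult_right_mono[OF d[of k] y[of k]] \<open>0 < \<delta>\<close> by (simp add: le_divide_eq mult.commute)
    moreover have "(\<lambda>k. (d k * y k) / \<delta>) \<longlonglongrightarrow> 0"
      using summable_LIMSEQ_zero[OF True] by (simp add: tendsto_divide_zero)
    ultimately have "y \<longlonglongrightarrow> 0"
      using y by (intro tendsto_sandwich[of "\<lambda>_. 0" y _ "\<lambda>k. (d k * y k) / \<delta>"]) auto
    then have "(\<lambda>t. ereal (\<eta> * (s + y t))) \<longlonglongrightarrow> ereal (\<eta> * (s + 0))"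
      by (intro tendsto_intros)
    then have lim: "limsup (\<lambda>t. ereal (\<eta> * (s + y t))) = ereal (\<eta> * s)"
      by (simp add: lim_imp_Limsup)
    have "(\<Sum>k<t. d k * y k) \<le> s" for t
      unfolding s_def using True f by (intro sum_le_suminf) auto
    then have "e (Suc t) \<le> \<eta> * (s + y t)" for t
      using \<open>0 \<le> \<eta>\<close> by (intro order_trans[OF bound] mult_left_mono add_right_mono)
    then have "limsup (\<lambda>t. ereal (e t)) \<le> ereal (\<eta> * s)"
      unfolding lim[symmetric] by (rule limsup_shift_le)
    with gt have "ereal \<epsilon> < ereal (\<eta> * s)" by (rule less_le_trans)
    then have "\<epsilon> \<le> \<eta> * s" by simp
    moreover have "(\<Sum>k. ennreal (d k * y k)) = ennreal s"
      unfolding s_def using f True by (intro suminf_ennreal_eq summable_sums)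
    ultimately show ?thesis
      using ennreal_leI[of \<epsilon> "\<eta> * s"] ennreal_mult'[OF \<open>0 \<le> \<eta>\<close>, of s] by simp
  next
    case False
    have top: "(\<Sum>k. ennreal (d k * y k)) = top"
    proof (rule ccontr)
      assume "(\<Sum>k. ennreal (d k * y k)) \<noteq> top"
      with False show False using summable_suminf_not_top[OF f] by simp
    qed
    show ?thesis
    proof (cases "\<eta> = 0")
      case True
      then have "limsup (\<lambda>t. ereal (e t)) \<le> limsup (\<lambda>t. ereal 0)"
        using bound by (intro limsup_shift_le) simp
      then have "limsup (\<lambda>t. ereal (e t)) \<le> ereal 0" by (simp add: Limsup_const)
      with gt have "ereal \<epsilon> < ereal 0" by (rule less_le_trans)
      then have "ennreal \<epsilon> = 0" by (simp add: ennreal_eq_0_iff)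
      then show ?thesis by simp
    qed (use top \<open>0 \<le> \<eta>\<close> in \<open>simp add: ennreal_mult_top\<close>)
  qed
qed

definition exposure ::
    "(nat \<Rightarrow> nat set) \<Rightarrow> nat \<Rightarrow> nat \<Rightarrow> (nat \<Rightarrow> nat \<Rightarrow> nat \<Rightarrow> 'a \<Rightarrow> real) \<Rightarrow> real \<Rightarrow> real \<Rightarrow> 'a \<Rightarrow> ennreal" where
  "exposure Nb L N \<alpha> c \<gamma> \<omega> = (\<Sum>k. ennreal (damping c \<gamma> k * trusted_malicious Nb L N \<alpha> k \<omega>))"

lemma le_exposure_of_limsup_eM_gt:
  fixes \<alpha> :: "nat \<Rightarrow> nat \<Rightarrow> nat \<Rightarrow> 'a \<Rightarrow> real" and \<omega> :: 'a
  assumes finite_Nb: "\<forall>l\<in>{1..L}. finite (Nb l)"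
    and c: "0 < c" "c < 1" and \<gamma>: "0 \<le> \<gamma>"
    and xM: "\<forall>j\<in>{L+1..N}. \<forall>k. \<bar>xM j k \<omega>\<bar> \<le> \<eta>" and \<eta>: "0 \<le> \<eta>"
    and i: "i \<in> {1..L}"
    and gt: "ereal \<epsilon> < limsup (\<lambda>t. ereal (eM Nb L N \<alpha> xM c \<gamma> i t \<omega>))"
  shows "ennreal \<epsilon> \<le> ennreal \<eta> * exposure Nb L N \<alpha> c \<gamma> \<omega>"
  unfolding exposure_def
proof (rule ennreal_le_of_limsup_gt[where d = "damping c \<gamma>" and y = "\<lambda>k. trusted_malicious Nb L N \<alpha> k \<omega>"
      and e = "\<lambda>t. eM Nb L N \<alpha> xM c \<gamma> i t \<omega>" and \<delta> = "(1 - c)\<^sup>2"])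
  show "eM Nb L N \<alpha> xM c \<gamma> i (Suc t) \<omega>
      \<le> \<eta> * ((\<Sum>k<t. damping c \<gamma> k * trusted_malicious Nb L N \<alpha> k \<omega>) + trusted_malicious Nb L N \<alpha> t \<omega>)" for t
    using finite_Nb c \<gamma> xM \<eta> i by (rule eM_Suc_le)
  show "(1 - c)\<^sup>2 \<le> damping c \<gamma> k" for k
    by (rule damping_ge[OF c \<gamma>])
qed (use c trusted_malicious_nonneg \<eta> gt in auto)

lemma damping_exp_sums_xi:
  assumes "EM \<noteq> 0" and "0 < \<gamma>"
  shows "(\<lambda>k. damping c \<gamma> k * exp (- 2 * EM\<^sup>2 * real (Suc k))) sums xi c \<gamma> EM"
proof -
  define u where "u = exp (2 * EM\<^sup>2)"
  define v where "v = exp (- \<gamma>)"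
  have u: "1 < u" using assms by (simp add: u_def)
  have v: "0 < v" "v < 1" using assms by (auto simp: v_def)
  have v2: "v\<^sup>2 < 1" using v by (simp add: power_less_one_iff)
  have "exp (- 2 * \<gamma>) = v\<^sup>2"
    unfolding v_def by (simp add: power2_eq_square flip: exp_add)
  then have xi: "xi c \<gamma> EM = 1 / (u - 1) - c * (1 + v) / (u - v) + c\<^sup>2 * v / (u - v\<^sup>2)"
    unfolding xi_def u_def v_def by simp
  text \<open>Expanding the damping factors splits the series into three geometric series with
    ratios 1/u, v/u and v^2/u.\<close>
  have summand: "damping c \<gamma> k * exp (- 2 * EM\<^sup>2 * real (Suc k))
      = (1/u) * (1/u)^k + (- c * (1 + v) / u) * (v/u)^k + (c\<^sup>2 * v / u) * (v\<^sup>2/u)^k" for k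
  proof -
    have lam_pow: "lam c \<gamma> n = c * v^n" for n
      unfolding lam_def v_def by (simp add: mult.commute flip: exp_of_nat_mult)
    have "exp (- 2 * EM\<^sup>2 * real (Suc k)) = exp (- (2 * EM\<^sup>2)) ^ (Suc k)"
      by (subst exp_of_nat_mult[symmetric]) (simp add: mult.commute)
    then have exp_pow: "exp (- 2 * EM\<^sup>2 * real (Suc k)) = (1/u)^(Suc k)"
      by (simp add: u_def exp_minus inverse_eq_divide)
    show ?thesis
      unfolding exp_pow using u
      by (simp add: lam_pow damping_def power_divide power_mult_distrib field_simps power2_eq_square
          flip: power_mult)
  qed
  have "(\<lambda>k. (1/u) * (1/u)^k + (- c * (1 + v) / u) * (v/u)^k + (c\<^sup>2 * v / u) * (v\<^sup>2/u)^k)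
      sums ((1/u) * (1 / (1 - 1/u)) + (- c * (1 + v) / u) * (1 / (1 - v/u))
            + (c\<^sup>2 * v / u) * (1 / (1 - v\<^sup>2/u)))"
    using u v v2 by (intro sums_add sums_mult geometric_sums) auto
  moreover have "(1/u) * (1 / (1 - 1/u)) + (- c * (1 + v) / u) * (1 / (1 - v/u))
      + (c\<^sup>2 * v / u) * (1 / (1 - v\<^sup>2/u)) = xi c \<gamma> EM"
    unfolding xi using u v v2 by (simp add: divide_simps)
  ultimately show ?thesis unfolding summand by simp
qed

lemma xi_nonneg:
  assumes "EM \<noteq> 0" and "0 < c" and "c < 1" and "0 < \<gamma>"
  shows "0 \<le> xi c \<gamma> EM"
proof -
  note sums = damping_exp_sums_xi[OF assms(1,4), of c]
  have "0 \<le> (\<Sum>k. damping c \<gamma> k * exp (- 2 * EM\<^sup>2 * real (Suc k)))"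
    using damping_nonneg assms by (intro suminf_nonneg sums_summable[OF sums]) simp
  then show ?thesis using sums_unique[OF sums] by simp
qed

lemma prob_sum_centered_nonneg_le:
  fixes P :: "'a measure" and X :: "nat \<Rightarrow> 'a \<Rightarrow> real"
  assumes "prob_space P"
    and bounds: "\<And>t \<omega>. \<omega> \<in> space P \<Longrightarrow> 0 \<le> X t \<omega> \<and> X t \<omega> \<le> 1"
    and indep: "prob_space.indep_vars P (\<lambda>_. borel) X UNIV"
    and mean: "\<And>t. integral\<^sup>L P (X t) - 1/2 = E"
    and "E \<le> 0"
  shows "measure P {\<omega> \<in> space P. 0 \<le> (\<Sum>s\<le>k. X s \<omega> - 1/2)} \<le> exp (- 2 * E\<^sup>2 * real (Suc k))"
proof -
  interpret prob_space P by fact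
  interpret H: Hoeffding_ineq P "{..k}" X "\<lambda>_. 0" "\<lambda>_. 1" "\<Sum>i\<le>k. expectation (X i)"
  proof unfold_locales
    show "indep_vars (\<lambda>_. borel) X {..k}" using indep_vars_subset[OF indep] by simp
    show "AE x in P. X i x \<in> {0..1}" for i using bounds by (intro AE_I2) auto
  qed simp_all
  define \<epsilon> where "\<epsilon> = - (real (Suc k) * E)"
  have "0 \<le> \<epsilon>" using \<open>E \<le> 0\<close> by (simp add: \<epsilon>_def mult_nonneg_nonpos)
  have "(\<Sum>i\<le>k. expectation (X i)) = real (Suc k) * (E + 1/2)"
    using mean by (simp add: algebra_simps)
  then have "{\<omega> \<in> space P. 0 \<le> (\<Sum>s\<le>k. X s \<omega> - 1/2)}
      = {x \<in> space P. (\<Sum>i\<le>k. X i x) \<ge> (\<Sum>i\<le>k. expectation (X i)) + \<epsilon>}"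
    by (auto simp: \<epsilon>_def sum_subtractf algebra_simps)
  also have "prob \<dots> \<le> exp (-2 * \<epsilon>\<^sup>2 / (\<Sum>i\<le>k. ((1::real) - 0)\<^sup>2))"
    by (rule H.Hoeffding_ineq_ge[OF \<open>0 \<le> \<epsilon>\<close>]) simp
  also have "-2 * \<epsilon>\<^sup>2 / (\<Sum>i\<le>k. ((1::real) - 0)\<^sup>2) = - 2 * E\<^sup>2 * real (Suc k)"
    by (simp add: \<epsilon>_def power2_eq_square field_simps)
  finally show ?thesis .
qed

lemma card_malicious_neighbours_le:
  assumes "finite (Nb l)" and "l \<in> {1..L}"
  shows "card ({L+1..N} \<inter> Nb l) \<le> min (dM Nb L) (N - L)"
proof -
  have "card ({L+1..N} \<inter> Nb l) \<le> card (Nb l)"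
    using assms(1) by (intro card_mono) auto
  also have "card (Nb l) \<le> dM Nb L"
    unfolding dM_def using assms(2) by (intro Max_ge) auto
  finally show ?thesis
    using card_mono[of "{L+1..N}" "{L+1..N} \<inter> Nb l"] by simp
qed

locale trust_observations = prob_space P
  for P :: "'a measure" +
  fixes Nb :: "nat \<Rightarrow> nat set" and L :: nat
    and \<alpha> :: "nat \<Rightarrow> nat \<Rightarrow> nat \<Rightarrow> 'a \<Rightarrow> real" and EM :: real
  assumes finite_Nb: "l \<in> {1..L} \<Longrightarrow> finite (Nb l)"
    and alpha_bounds: "l \<in> {1..L} \<Longrightarrow> j \<in> Nb l \<Longrightarrow> \<omega> \<in> space P \<Longrightarrow> 0 \<le> \<alpha> l j t \<omega> \<and> \<alpha> l j t \<omega> \<le> 1"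
    and alpha_measurable: "l \<in> {1..L} \<Longrightarrow> j \<in> Nb l \<Longrightarrow> \<alpha> l j t \<in> borel_measurable P"
    and alpha_indep: "l \<in> {1..L} \<Longrightarrow> j \<in> Nb l \<Longrightarrow> indep_vars (\<lambda>_. borel) (\<lambda>t. \<alpha> l j t) UNIV"
    and alpha_mean_malicious: "l \<in> {1..L} \<Longrightarrow> j \<in> Nb l \<Longrightarrow> L < j \<Longrightarrow> expectation (\<alpha> l j t) - 1/2 = EM"
    and EM_neg: "EM < 0"
begin

lemma trusted_event_eq:
  assumes "j \<in> Nb l"
  shows "{\<omega> \<in> space P. j \<in> trusted Nb \<alpha> l k \<omega>} = {\<omega> \<in> space P. 0 \<le> (\<Sum>s\<le>k. \<alpha> l j s \<omega> - 1/2)}"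
  using assms by (auto simp: trusted_def beta_def)

lemma trusted_event_sets:
  assumes "l \<in> {1..L}"
  shows "{\<omega> \<in> space P. j \<in> trusted Nb \<alpha> l k \<omega>} \<in> sets P"
proof (cases "j \<in> Nb l")
  case True
  have [measurable]: "\<alpha> l j s \<in> borel_measurable P" for s
    using alpha_measurable[OF assms True] .
  show ?thesis unfolding trusted_event_eq[OF True] by measurable
qed (auto simp: trusted_def)

lemma prob_trusted_malicious_le:
  assumes "l \<in> {1..L}" and "j \<in> Nb l" and "L < j"
  shows "prob {\<omega> \<in> space P. j \<in> trusted Nb \<alpha> l k \<omega>} \<le> exp (- 2 * EM\<^sup>2 * real (Suc k))"
  unfolding trusted_event_eq[OF assms(2)]
  by (rule prob_sum_centered_nonneg_le[OF prob_space_axioms])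
    (use alpha_bounds alpha_indep alpha_mean_malicious EM_neg assms in auto)

lemma trusted_link_measurable:
  assumes "l \<in> {1..L}"
  shows "(\<lambda>\<omega>. if j \<in> trusted Nb \<alpha> l k \<omega> then 1/2 else 0 :: real) \<in> borel_measurable P"
  using trusted_event_sets[OF assms] by (intro measurable_If) auto

lemma trusted_malicious_measurable: "trusted_malicious Nb L N \<alpha> k \<in> borel_measurable P"
  unfolding trusted_malicious_def[abs_def] using trusted_link_measurable by measurable

lemma nn_integral_trusted_link_le:
  assumes "l \<in> {1..L}" and "L < j"
  shows "(\<integral>\<^sup>+\<omega>. ennreal (if j \<in> trusted Nb \<alpha> l k \<omega> then 1/2 else 0) \<partial>P)
    \<le> ennreal (if j \<in> Nb l then exp (- 2 * EM\<^sup>2 * real (Suc k)) / 2 else 0)"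
proof (cases "j \<in> Nb l")
  case True
  define B where "B = {\<omega> \<in> space P. j \<in> trusted Nb \<alpha> l k \<omega>}"
  have "B \<in> sets P" unfolding B_def using trusted_event_sets[OF assms(1)] .
  have "(\<integral>\<^sup>+\<omega>. ennreal (if j \<in> trusted Nb \<alpha> l k \<omega> then 1/2 else 0) \<partial>P)
      = (\<integral>\<^sup>+\<omega>. ennreal (1/2) * indicator B \<omega> \<partial>P)"
    by (intro nn_integral_cong) (auto simp: B_def split: split_indicator)
  also have "\<dots> = ennreal (1/2) * emeasure P B"
    using \<open>B \<in> sets P\<close> by (rule nn_integral_cmult_indicator)
  also have "\<dots> = ennreal (1/2 * prob B)"
    using ennreal_mult[of "1/2" "prob B"] by (simp add: emeasure_eq_measure)
  also have "\<dots> \<le> ennreal (exp (- 2 * EM\<^sup>2 * real (Suc k)) / 2)"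
    using prob_trusted_malicious_le[OF assms(1) True assms(2)] by (simp add: B_def)
  finally show ?thesis using True by simp
qed (simp add: trusted_def)

lemma nn_integral_trusted_malicious_le:
  "(\<integral>\<^sup>+\<omega>. ennreal (trusted_malicious Nb L N \<alpha> k \<omega>) \<partial>P)
    \<le> ennreal (real L * real (min (dM Nb L) (N - L)) / 2 * exp (- 2 * EM\<^sup>2 * real (Suc k)))"
proof -
  define e where "e = exp (- 2 * EM\<^sup>2 * real (Suc k))"
  have "(\<integral>\<^sup>+\<omega>. ennreal (trusted_malicious Nb L N \<alpha> k \<omega>) \<partial>P)
      = (\<Sum>l\<in>{1..L}. \<Sum>j\<in>{L+1..N}. \<integral>\<^sup>+\<omega>. ennreal (if j \<in> trusted Nb \<alpha> l k \<omega> then 1/2 else 0) \<partial>P)"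
  proof -
    have [measurable]: "(\<lambda>\<omega>. if j \<in> trusted Nb \<alpha> l k \<omega> then 1/2 else 0 :: real) \<in> borel_measurable P"
      if "l \<in> {1..L}" for l j
      using trusted_link_measurable[OF that] .
    have "(\<integral>\<^sup>+\<omega>. ennreal (trusted_malicious Nb L N \<alpha> k \<omega>) \<partial>P)
        = (\<integral>\<^sup>+\<omega>. (\<Sum>l\<in>{1..L}. \<Sum>j\<in>{L+1..N}. ennreal (if j \<in> trusted Nb \<alpha> l k \<omega> then 1/2 else 0)) \<partial>P)"
      by (simp add: trusted_malicious_def sum_nonneg)
    also have "\<dots> = (\<Sum>l\<in>{1..L}. \<integral>\<^sup>+\<omega>. (\<Sum>j\<in>{L+1..N}. ennreal (if j \<in> trusted Nb \<alpha> l k \<omega> then 1/2 else 0)) \<partial>P)"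
      by (rule nn_integral_sum) measurable
    also have "\<dots> = (\<Sum>l\<in>{1..L}. \<Sum>j\<in>{L+1..N}. \<integral>\<^sup>+\<omega>. ennreal (if j \<in> trusted Nb \<alpha> l k \<omega> then 1/2 else 0) \<partial>P)"
      by (intro sum.cong refl nn_integral_sum) measurable
    finally show ?thesis .
  qed
  also have "\<dots> \<le> (\<Sum>l\<in>{1..L}. \<Sum>j\<in>{L+1..N}. ennreal (if j \<in> Nb l then e / 2 else 0))"
    unfolding e_def using nn_integral_trusted_link_le by (intro sum_mono) auto
  also have "\<dots> = ennreal (\<Sum>l\<in>{1..L}. real (card ({L+1..N} \<inter> Nb l)) * (e / 2))"
    by (simp add: sum.inter_restrict[symmetric] e_def sum_nonneg Int_commute)
  also have "\<dots> \<le> ennreal (\<Sum>l\<in>{1..L}. real (min (dM Nb L) (N - L)) * (e / 2))"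
    using card_malicious_neighbours_le finite_Nb
    by (intro ennreal_leI sum_mono mult_right_mono) (auto simp: e_def)
  also have "\<dots> = ennreal (real L * real (min (dM Nb L) (N - L)) / 2 * e)"
    by (simp add: mult.assoc)
  finally show ?thesis unfolding e_def .
qed

lemma exposure_measurable: "exposure Nb L N \<alpha> c \<gamma> \<in> borel_measurable P"
  unfolding exposure_def[abs_def] using trusted_malicious_measurable by measurable

lemma nn_integral_exposure_le:
  assumes "0 < c" and "c < 1" and "0 < \<gamma>"
  shows "(\<integral>\<^sup>+\<omega>. exposure Nb L N \<alpha> c \<gamma> \<omega> \<partial>P)
    \<le> ennreal (real L * real (min (dM Nb L) (N - L)) / 2 * xi c \<gamma> EM)"
proof -
  define C where "C = real L * real (min (dM Nb L) (N - L)) / 2"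
  define e where "e k = exp (- 2 * EM\<^sup>2 * real (Suc k))" for k
  have d: "0 \<le> damping c \<gamma> k" for k
    using damping_nonneg assms by simp
  have [measurable]: "trusted_malicious Nb L N \<alpha> k \<in> borel_measurable P" for k
    by (rule trusted_malicious_measurable)
  have summand_le: "(\<integral>\<^sup>+\<omega>. ennreal (damping c \<gamma> k * trusted_malicious Nb L N \<alpha> k \<omega>) \<partial>P)
      \<le> ennreal (C * (damping c \<gamma> k * e k))" for k
  proof -
    have "(\<integral>\<^sup>+\<omega>. ennreal (damping c \<gamma> k * trusted_malicious Nb L N \<alpha> k \<omega>) \<partial>P)
        = ennreal (damping c \<gamma> k) * (\<integral>\<^sup>+\<omega>. ennreal (trusted_malicious Nb L N \<alpha> k \<omega>) \<partial>P)"
      by (simp only: ennreal_mult[OF d trusted_malicious_nonneg]) (rule nn_integral_cmult, measurable)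
    also have "\<dots> \<le> ennreal (damping c \<gamma> k) * ennreal (C * e k)"
      unfolding C_def e_def by (rule mult_left_mono[OF nn_integral_trusted_malicious_le]) simp
    also have "\<dots> = ennreal (C * (damping c \<gamma> k * e k))"
      using d[of k] by (subst ennreal_mult[symmetric]) (auto simp: C_def e_def mult_ac)
    finally show ?thesis .
  qed
  have "(\<lambda>k. C * (damping c \<gamma> k * e k)) sums (C * xi c \<gamma> EM)"
    unfolding e_def using damping_exp_sums_xi EM_neg assms by (intro sums_mult) auto
  then have "(\<Sum>k. ennreal (C * (damping c \<gamma> k * e k))) = ennreal (C * xi c \<gamma> EM)"
    using d by (intro suminf_ennreal_eq) (auto simp: C_def e_def)
  moreover have "(\<integral>\<^sup>+\<omega>. exposure Nb L N \<alpha> c \<gamma> \<omega> \<partial>P)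
      = (\<Sum>k. \<integral>\<^sup>+\<omega>. ennreal (damping c \<gamma> k * trusted_malicious Nb L N \<alpha> k \<omega>) \<partial>P)"
    unfolding exposure_def by (rule nn_integral_suminf) measurable
  moreover have "\<dots> \<le> (\<Sum>k. ennreal (C * (damping c \<gamma> k * e k)))"
    by (intro suminf_le summand_le summableI)
  ultimately show ?thesis unfolding C_def by simp
qed

end

lemma abs_malicious_le_of_state_bound:
  assumes "\<forall>k\<in>{1..N}. \<forall>t. \<forall>\<omega>\<in>space P. \<bar>state Nb L \<alpha> xM x0 c \<gamma> k t \<omega>\<bar> \<le> \<eta>"
    and "\<omega> \<in> space P"
  shows "\<forall>j\<in>{L+1..N}. \<forall>k. \<bar>xM j k \<omega>\<bar> \<le> \<eta>"
proof (intro ballI allI)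
  fix j k assume j: "j \<in> {L+1..N}"
  then have "\<bar>state Nb L \<alpha> xM x0 c \<gamma> j k \<omega>\<bar> \<le> \<eta>" using assms by simp
  with j show "\<bar>xM j k \<omega>\<bar> \<le> \<eta>" by (simp add: state_def)
qed

lemma measure_le_of_nn_integral_le:
  fixes F :: "'a \<Rightarrow> ennreal"
  assumes [measurable]: "F \<in> borel_measurable M"
    and "0 < \<epsilon>" and "0 \<le> \<eta>" and "0 \<le> B"
    and integral: "(\<integral>\<^sup>+x. F x \<partial>M) \<le> ennreal B"
    and E: "\<And>x. x \<in> E \<Longrightarrow> x \<in> space M \<and> ennreal \<epsilon> \<le> ennreal \<eta> * F x"
  shows "measure M E \<le> \<eta> * B / \<epsilon>"
proof -
  define E' where "E' = {x \<in> space M. 1 \<le> ennreal (\<eta> / \<epsilon>) * F x}"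
  have "E' \<in> sets M" unfolding E'_def by measurable
  have "E \<subseteq> E'"
  proof
    fix x assume "x \<in> E"
    then have "ennreal (1 / \<epsilon>) * ennreal \<epsilon> \<le> ennreal (1 / \<epsilon>) * (ennreal \<eta> * F x)"
      using E by (intro mult_left_mono) auto
    moreover have "ennreal (1 / \<epsilon>) * ennreal \<epsilon> = 1"
      using \<open>0 < \<epsilon>\<close> by (subst ennreal_mult[symmetric]) auto
    moreover have "ennreal (1 / \<epsilon>) * (ennreal \<eta> * F x) = ennreal (\<eta> / \<epsilon>) * F x"
      using \<open>0 < \<epsilon>\<close> \<open>0 \<le> \<eta>\<close>
      by (subst mult.assoc[symmetric], subst ennreal_mult[symmetric]) auto
    ultimately show "x \<in> E'"
      using E \<open>x \<in> E\<close> by (simp add: E'_def)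
  qed
  have "emeasure M E' \<le> ennreal (\<eta> / \<epsilon>) * (\<integral>\<^sup>+x. F x * indicator (space M) x \<partial>M)"
    unfolding E'_def by (rule nn_integral_Markov_inequality) auto
  also have "(\<integral>\<^sup>+x. F x * indicator (space M) x \<partial>M) = (\<integral>\<^sup>+x. F x \<partial>M)"
    by (intro nn_integral_cong) simp
  also have "ennreal (\<eta> / \<epsilon>) * \<dots> \<le> ennreal (\<eta> / \<epsilon>) * ennreal B"
    using integral by (rule mult_left_mono) simp
  also have "\<dots> = ennreal (\<eta> * B / \<epsilon>)"
    using \<open>0 < \<epsilon>\<close> \<open>0 \<le> \<eta>\<close> \<open>0 \<le> B\<close> by (subst ennreal_mult[symmetric]) auto
  finally have "emeasure M E \<le> ennreal (\<eta> * B / \<epsilon>)"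
    using emeasure_mono[OF \<open>E \<subseteq> E'\<close> \<open>E' \<in> sets M\<close>] by simp
  then show ?thesis
    unfolding measure_def using assms by (intro enn2real_leI) auto
qed

theorem mainTheorem3:
  fixes P :: "'a measure" and Nb :: "nat \<Rightarrow> nat set" and L N :: nat
    and \<alpha> :: "nat \<Rightarrow> nat \<Rightarrow> nat \<Rightarrow> 'a \<Rightarrow> real"
    and xM :: "nat \<Rightarrow> nat \<Rightarrow> 'a \<Rightarrow> real" and x0 :: "nat \<Rightarrow> real"
    and \<eta> c \<gamma> EL EM \<epsilon> :: real and i :: nat
  assumes "prob_space P"
    and "L \<le> N"
    and "\<forall>k\<in>{1..N}. Nb k \<subseteq> {1..N} \<and> k \<notin> Nb k"
    and "dM Nb L < N"
    and "\<forall>k\<in>{1..L}. \<forall>j\<in>Nb k. \<forall>t. \<forall>\<omega>\<in>space P. 0 \<le> \<alpha> k j t \<omega> \<and> \<alpha> k j t \<omega> \<le> 1"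
    and "\<forall>k\<in>{1..L}. \<forall>j\<in>Nb k. \<forall>t. \<alpha> k j t \<in> borel_measurable P"
    and "\<forall>k\<in>{1..L}. \<forall>j\<in>Nb k. prob_space.indep_vars P (\<lambda>_. borel) (\<lambda>t. \<alpha> k j t) UNIV"
    and "\<forall>k\<in>{1..L}. \<forall>j\<in>Nb k. \<forall>t. j \<le> L \<longrightarrow> integral\<^sup>L P (\<alpha> k j t) - 1/2 = EL"
    and "\<forall>k\<in>{1..L}. \<forall>j\<in>Nb k. \<forall>t. L < j \<longrightarrow> integral\<^sup>L P (\<alpha> k j t) - 1/2 = EM"
    and "EL > 0" and "EM < 0"
    and "0 < c" and "c < 1" and "\<gamma> > 0"
    and "\<forall>j\<in>{L+1..N}. \<forall>t. xM j t \<in> borel_measurable P"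
    and "\<forall>k\<in>{1..N}. \<forall>t. \<forall>\<omega>\<in>space P. \<bar>state Nb L \<alpha> xM x0 c \<gamma> k t \<omega>\<bar> \<le> \<eta>"
    and "i \<in> {1..L}" and "\<epsilon> > 0"
  shows "measure P {\<omega> \<in> space P.
            limsup (\<lambda>t. ereal (eM Nb L N \<alpha> xM c \<gamma> i t \<omega>)) > ereal \<epsilon>}
         \<le> \<eta> * uM Nb L N c \<gamma> EM \<epsilon>"
proof -
  have finite_Nb: "finite (Nb l)" if "l \<in> {1..L}" for l
  proof (rule finite_subset)
    show "Nb l \<subseteq> {1..N}" using assms(2,3) that by auto
  qed simp
  interpret trust_observations P Nb L \<alpha> EM
    by (intro trust_observations.intro trust_observations_axioms.intro assms(1))
      (use assms(5-7,9,11) finite_Nb in auto)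
  obtain \<omega>\<^sub>0 where "\<omega>\<^sub>0 \<in> space P" using not_empty by blast
  then have "\<bar>state Nb L \<alpha> xM x0 c \<gamma> i 0 \<omega>\<^sub>0\<bar> \<le> \<eta>" using assms(2,16,17) by auto
  then have "0 \<le> \<eta>" by (rule order_trans[OF abs_ge_zero])
  have "measure P {\<omega> \<in> space P. limsup (\<lambda>t. ereal (eM Nb L N \<alpha> xM c \<gamma> i t \<omega>)) > ereal \<epsilon>}
      \<le> \<eta> * (real L * real (min (dM Nb L) (N - L)) / 2 * xi c \<gamma> EM) / \<epsilon>"
  proof (rule measure_le_of_nn_integral_le[OF exposure_measurable])
    show "(\<integral>\<^sup>+\<omega>. exposure Nb L N \<alpha> c \<gamma> \<omega> \<partial>P)
        \<le> ennreal (real L * real (min (dM Nb L) (N - L)) / 2 * xi c \<gamma> EM)"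
      using assms(12-14) by (rule nn_integral_exposure_le)
    show "0 \<le> real L * real (min (dM Nb L) (N - L)) / 2 * xi c \<gamma> EM"
      using xi_nonneg assms(11-14) by simp
    show "\<omega> \<in> space P \<and> ennreal \<epsilon> \<le> ennreal \<eta> * exposure Nb L N \<alpha> c \<gamma> \<omega>"
      if "\<omega> \<in> {\<omega> \<in> space P. limsup (\<lambda>t. ereal (eM Nb L N \<alpha> xM c \<gamma> i t \<omega>)) > ereal \<epsilon>}" for \<omega>
      using that finite_Nb assms(12-14,17) abs_malicious_le_of_state_bound[OF assms(16)] \<open>0 \<le> \<eta>\<close>
      by (auto intro!: le_exposure_of_limsup_eM_gt)
  qed (use assms(18) \<open>0 \<le> \<eta>\<close> in auto)
  then show ?thesis by (simp add: uM_def)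
qed

end
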